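(* For every $\eta>0$ and $\delta\ge0$ there exist $C_{\eta,\delta}>0$ and $\varepsilon_*>0$, independent of $\varepsilon$, such that for all $\varepsilon\in(0,\varepsilon_* )$ and all $h\in L^2(\mathbb R_+)$, $$\big\|Z^{1/2}|\log Z|^{1+\frac\eta3}h\big\|_{L^2(\mathbb R_+)}\le C_{\eta,\delta}\,|\log\varepsilon|^{1+\frac\eta3}\Big(\|Z^{1/2}h\|_{L^2(\mathbb R_+)}+\varepsilon^{\frac14+\delta}\|h\|_{L^2(\mathbb R_+)}\Big).$$ Consequently, for every $L^2$ function $R$ supported in $[0,2]$, $$|\langle R,\partial_y^{-1}h\rangle|\le C_{\eta,\delta}|\log\varepsilon|^{1+\frac\eta3}\|Z^{1/2}R\|_{L^2}\Big(\|Z^{1/2}h\|_{L^2}+\varepsilon^{\frac14+\delta}\|h\|_{L^2}\Big).$$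
   Context: $\langle f,g\rangle=\int_0^\infty f\bar g\,dy$, $\partial_y^{-1}h(y)=\int_0^yh(s)\,ds$. Standing assumptions on the shear profile: $U_s,H_s\in C^3(\mathbb R_+)\cap C^1(\overline{\mathbb R_+})$ are functions of $Y\ge0$ with $U_s(0)=0$, $H_s'(0)=0$, $U_s(Y)\to U_E$ and $H_s(Y)\to H_E\neq0$ as $Y\to\infty$; $\bar M:=\sum_{k=1}^3\sup_{Y\ge0}(1+Y)^3(|\partial_Y^kU_s(Y)|+|\partial_Y^kH_s(Y)|)<\infty$; there are constants $0<\underline\gamma\le\bar\gamma$ with $\underline\gamma\le|H_s(Y)|\le\bar\gamma$ for all $Y>0$; and with $G_s:=H_s^2-U_s^2$, $\gamma_0:=\inf_{Y\ge0}G_s(Y)>0$. The weight $Z$: let $\widetilde G\in C^1([0,\infty))$ be a function with $\widetilde G(y)=1/G_s(y/\sqrt\varepsilon)$ for $0\le y\le1$, $\widetilde G(y)=0$ for $y\ge2$, $\widetilde G\ge0$ on $[0,\infty)$, $\frac1{2\bar\gamma^2}\le\widetilde G\le\frac2{\gamma_0}$ and $|\widetilde G'|\le C\bar M\varepsilon$ on $[1,3/2]$ (with $C$ an absolute constant), and $\widetilde G'\le0$ on $[3/2,2]$; set $Z(y)=\int_0^y\widetilde G(s)\,ds$. *)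

theory Defs
  imports "HOL-Analysis.Analysis"
begin

definition in_L2 :: "(real \<Rightarrow> complex) \<Rightarrow> bool" where
  "in_L2 f \<longleftrightarrow> set_borel_measurable lborel {0..} f
     \<and> set_integrable lborel {0..} (\<lambda>y. (cmod (f y))\<^sup>2)"

definition L2norm :: "(real \<Rightarrow> complex) \<Rightarrow> real" where
  "L2norm f = sqrt (LINT y:{0..}|lborel. (cmod (f y))\<^sup>2)"

definition inner0 :: "(real \<Rightarrow> complex) \<Rightarrow> (real \<Rightarrow> complex) \<Rightarrow> complex" where
  "inner0 f g = (LINT y:{0..}|lborel. f y * cnj (g y))"

definition prim :: "(real \<Rightarrow> complex) \<Rightarrow> real \<Rightarrow> complex" where
  "prim h y = (LINT s:{0..y}|lborel. h s)"

definition Gs :: "(real \<Rightarrow> real) \<Rightarrow> (real \<Rightarrow> real) \<Rightarrow> real \<Rightarrow> real" where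
  "Gs Us Hs Y = (Hs Y)\<^sup>2 - (Us Y)\<^sup>2"

definition gamma0 :: "(real \<Rightarrow> real) \<Rightarrow> (real \<Rightarrow> real) \<Rightarrow> real" where
  "gamma0 Us Hs = Inf (Gs Us Hs ` {0..})"

definition C3_pos :: "(real \<Rightarrow> real) \<Rightarrow> bool" where
  "C3_pos f \<longleftrightarrow> (\<forall>k<3. \<forall>Y>0. ((deriv ^^ k) f has_real_derivative (deriv ^^ Suc k) f Y) (at Y))
     \<and> continuous_on {0<..} ((deriv ^^ 3) f)"

definition C1_closed :: "(real \<Rightarrow> real) \<Rightarrow> bool" where
  "C1_closed f \<longleftrightarrow> (\<exists>f'. continuous_on {0..} f'
      \<and> (\<forall>Y\<ge>0. (f has_real_derivative f' Y) (at Y within {0..})))"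

definition Mbar :: "(real \<Rightarrow> real) \<Rightarrow> (real \<Rightarrow> real) \<Rightarrow> real" where
  "Mbar Us Hs = (\<Sum>k\<in>{1..3::nat}. SUP Y\<in>{0<..}. (1 + Y)^3 * (\<bar>(deriv ^^ k) Us Y\<bar> + \<bar>(deriv ^^ k) Hs Y\<bar>))"

definition shear_profile ::
  "(real \<Rightarrow> real) \<Rightarrow> (real \<Rightarrow> real) \<Rightarrow> real \<Rightarrow> real \<Rightarrow> real \<Rightarrow> real \<Rightarrow> bool" where
  "shear_profile Us Hs UE HE gl gu \<longleftrightarrow>
     C3_pos Us \<and> C3_pos Hs \<and> C1_closed Us \<and> C1_closed Hs
   \<and> Us 0 = 0 \<and> (Hs has_real_derivative 0) (at 0 within {0..})
   \<and> (Us \<longlongrightarrow> UE) at_top \<and> (Hs \<longlongrightarrow> HE) at_top \<and> HE \<noteq> 0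
   \<and> (\<forall>k\<in>{1..3::nat}. bdd_above ((\<lambda>Y. (1 + Y)^3 * (\<bar>(deriv ^^ k) Us Y\<bar> + \<bar>(deriv ^^ k) Hs Y\<bar>)) ` {0<..}))
   \<and> 0 < gl \<and> gl \<le> gu \<and> (\<forall>Y>0. gl \<le> \<bar>Hs Y\<bar> \<and> \<bar>Hs Y\<bar> \<le> gu)
   \<and> bdd_below (Gs Us Hs ` {0..}) \<and> gamma0 Us Hs > 0"

text \<open>admissible cut-off function G tilde for parameter eps (Cabs = the absolute constant)\<close>
definition weight_fn ::
  "(real \<Rightarrow> real) \<Rightarrow> (real \<Rightarrow> real) \<Rightarrow> real \<Rightarrow> real \<Rightarrow> real \<Rightarrow> (real \<Rightarrow> real) \<Rightarrow> bool" where
  "weight_fn Us Hs gu Cabs eps G \<longleftrightarrow>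
     (\<exists>G'. continuous_on {0..} G' \<and> (\<forall>y\<ge>0. (G has_real_derivative G' y) (at y within {0..}))
       \<and> (\<forall>y\<in>{0..1}. G y = 1 / Gs Us Hs (y / sqrt eps))
       \<and> (\<forall>y\<ge>2. G y = 0)
       \<and> (\<forall>y\<ge>0. G y \<ge> 0)
       \<and> (\<forall>y\<in>{0..3/2}. 1 / (2 * gu\<^sup>2) \<le> G y \<and> G y \<le> 2 / gamma0 Us Hs)
       \<and> (\<forall>y\<in>{1..3/2}. \<bar>G' y\<bar> \<le> Cabs * Mbar Us Hs * eps)
       \<and> (\<forall>y\<in>{3/2..2}. G' y \<le> 0))"

definition Zw :: "(real \<Rightarrow> real) \<Rightarrow> real \<Rightarrow> real" where
  "Zw G y = (LINT s:{0..y}|lborel. G s)"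

end

theory Submission
  imports Defs
begin

(* The weight Z vanishes only at y = 0, where it grows at least linearly (Z y >= g y on [0,2]),
   and it is bounded above by some K.

   First estimate: where Z is small the factor sqrt Z absorbs the logarithm,
   sqrt z * |ln z|^p <= (4p)^p * z^(1/4), so for z <= eps^(4b) the weight is O(eps^b);
   for eps^(4b) <= z <= K one simply has |ln z| = O(|ln eps|).

   Second estimate: Cauchy-Schwarz against the weight Z + eps^(2b) >= g y + eps^(2b) gives the
   Hardy-type bound |prim h y|^2 <= ln (1 + g y / eps^(2b)) / g * ||sqrt (Z + eps^(2b)) h||^2.
   Dividing by Z y >= g y, this is O(|ln eps| / (y + eps^(2b))) times the norm, so a second
   Cauchy-Schwarz against Z |R|^2 only costs the integral of 1 / (y + eps^(2b)) over [0,2],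
   which is again O(|ln eps|). *)

lemma ln_le_neg_one:
  fixes eps :: real
  assumes "0 < eps" "eps \<le> exp (- 1)"
  shows "ln eps \<le> - 1"
  using assms ln_le_cancel_iff[of eps "exp (- 1)"] by simp

lemma abs_ln_le_powr:
  fixes eps p :: real
  assumes "0 < eps" "eps \<le> exp (- 1)" "p \<ge> 1"
  shows "\<bar>ln eps\<bar> \<le> \<bar>ln eps\<bar> powr p"
proof -
  have "1 \<le> \<bar>ln eps\<bar>" using ln_le_neg_one[OF assms(1,2)] by simp
  then show ?thesis using powr_mono[OF assms(3)] by fastforce
qed

lemma le_two_sqrt_mult_if_le_scaled_sum:
  fixes x a b :: real
  assumes "a \<ge> 0" "b \<ge> 0" and le: "\<And>l. l > 0 \<Longrightarrow> x \<le> l * a + b / l"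
  shows "x \<le> 2 * sqrt (a * b)"
proof (cases "a > 0 \<and> b > 0")
  case True
  define l where "l = sqrt (b / a)"
  have "l > 0" using True by (simp add: l_def)
  moreover have "l * a = sqrt (a * b)" "b / l = sqrt (a * b)"
    using True by (simp_all add: l_def real_sqrt_divide real_sqrt_mult field_simps)
  ultimately show ?thesis using le by fastforce
next
  case False
  have "x \<le> 0"
  proof (rule ccontr)
    assume "\<not> x \<le> 0"
    then have x: "x > 0" by simp
    show False
    proof (cases "a = 0")
      case True
      define l where "l = 2 * b / x + 1"
      have l: "l > 0" using x \<open>b \<ge> 0\<close> by (simp add: l_def add_nonneg_pos)
      have "b < x * l" using x \<open>b \<ge> 0\<close> by (simp add: l_def algebra_simps)
      then have "b / l < x" using l by (simp add: divide_less_eq mult.commute)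
      then show False using le[OF l] True by simp
    next
      case False
      then have "b = 0" "a > 0" using \<open>\<not> (a > 0 \<and> b > 0)\<close> assms by auto
      then show False using le[of "x / (2 * a)"] x by (simp add: field_simps)
    qed
  qed
  moreover have "0 \<le> 2 * sqrt (a * b)" using assms(1,2) by simp
  ultimately show ?thesis by linarith
qed

lemma mult_le_scaled_squares:
  fixes l a b :: real
  assumes "l > 0"
  shows "a * b \<le> l * a\<^sup>2 + b\<^sup>2 / (4 * l)"
proof -
  have "l * a\<^sup>2 + b\<^sup>2 / (4 * l) - a * b = (2 * l * a - b)\<^sup>2 / (4 * l)"
    using assms by (simp add: field_simps power2_eq_square)
  moreover have "0 \<le> (2 * l * a - b)\<^sup>2 / (4 * l)" using assms by simp
  ultimately show ?thesis by linarith
qed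

lemma sqrt_add_le_sqrt_two_mult:
  fixes a b :: real
  assumes "a \<ge> 0" "b \<ge> 0"
  shows "sqrt a + b \<le> sqrt 2 * sqrt (a + b\<^sup>2)"
proof -
  have "(sqrt a + b)\<^sup>2 \<le> 2 * (a + b\<^sup>2)"
    using assms sum_squares_bound[of "sqrt a" b] by (simp add: power2_sum)
  then have "sqrt a + b \<le> sqrt (2 * (a + b\<^sup>2))"
    using assms by (simp add: real_le_rsqrt)
  then show ?thesis by (simp add: real_sqrt_mult[symmetric] distrib_left)
qed

lemma min_le_two_mult_max_div:
  fixes y k a :: real
  assumes "y \<ge> 0" "k > 0" "a \<ge> 0"
  shows "min (y / k) a \<le> 2 * y * max 1 a / (y + k)"
proof (cases "y \<le> k")
  case True
  have "y / k \<le> 2 * y / (y + k)" using True assms by (simp add: field_simps mult_right_mono)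
  also have "\<dots> \<le> 2 * y * max 1 a / (y + k)"
    using assms by (intro divide_right_mono) (auto simp: mult_le_cancel_left1)
  finally show ?thesis by simp
next
  case False
  have "a \<le> 2 * y * a / (y + k)" using False assms by (simp add: field_simps mult_left_mono)
  also have "\<dots> \<le> 2 * y * max 1 a / (y + k)"
    using assms by (intro divide_right_mono mult_left_mono) auto
  finally show ?thesis by simp
qed

lemma sqrt_mult_abs_ln_powr_le_root4:
  fixes z p :: real
  assumes z: "0 < z" "z \<le> 1" and p: "p > 0"
  shows "sqrt z * \<bar>ln z\<bar> powr p \<le> (4 * p) powr p * z powr (1/4)"
proof -
  define a where "a = 1 / (4 * p)"
  have a: "a > 0" using p by (simp add: a_def)
  have "1 \<le> 1 / z" using z by simp
  have "\<bar>ln z\<bar> = ln (1 / z)" using z by (simp add: ln_div)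
  also have "\<dots> \<le> (1 / z) powr a / a" by (rule ln_powr_bound[OF \<open>1 \<le> 1 / z\<close> a])
  finally have "\<bar>ln z\<bar> powr p \<le> ((1 / z) powr a / a) powr p"
    using p by (intro powr_mono2) auto
  also have "\<dots> = (4 * p) powr p * z powr (- 1/4)"
    using a p z by (simp add: a_def powr_divide powr_powr powr_minus_divide)
  finally have "sqrt z * \<bar>ln z\<bar> powr p \<le> sqrt z * ((4 * p) powr p * z powr (- 1/4))"
    using z by (intro mult_left_mono) auto
  also have "\<dots> = (4 * p) powr p * (z powr (1/2) * z powr (- 1/4))"
    using z by (simp add: powr_half_sqrt)
  also have "z powr (1/2) * z powr (- 1/4) = z powr (1/4)"
    using z by (simp add: powr_add[symmetric])
  finally show ?thesis .
qed

definition log_weight_const :: "real \<Rightarrow> real \<Rightarrow> real \<Rightarrow> real" where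
  "log_weight_const p b K = (4 * p) powr p + (4 * b) powr p + K powr p"

lemma log_weight_const_pos: "K > 0 \<Longrightarrow> log_weight_const p b K > 0"
  unfolding log_weight_const_def by (simp add: add_nonneg_pos)

text \<open>Split at \<open>z = \<epsilon>\<^sup>4\<^sup>b\<close> and \<open>z = 1\<close>: below \<open>\<epsilon>\<^sup>4\<^sup>b\<close> the factor \<open>\<surd>z\<close> beats the
  logarithm, in between \<open>\<bar>ln z\<bar> \<le> 4b\<bar>ln \<epsilon>\<bar>\<close>, and above \<open>1\<close> the logarithm is bounded by \<open>K\<close>.\<close>
lemma sqrt_mult_abs_ln_powr_le:
  fixes z eps p b K :: real
  assumes p: "p \<ge> 1" and b: "b > 0" and K: "K \<ge> 1"
    and eps: "0 < eps" "eps \<le> exp (- 1)" and z: "0 \<le> z" "z \<le> K"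
  shows "sqrt z * \<bar>ln z\<bar> powr p
    \<le> log_weight_const p b K * \<bar>ln eps\<bar> powr p * (sqrt z + eps powr b)"
proof -
  define L where "L = \<bar>ln eps\<bar>"
  define M where "M = L powr p * (sqrt z + eps powr b)"
  have "ln eps \<le> - 1" using ln_le_neg_one[OF eps] .
  then have L: "L = - ln eps" "L \<ge> 1" by (auto simp: L_def)
  have Lp: "L powr p \<ge> 1" using L p by (simp add: ge_one_powr_ge_zero)
  have s: "0 \<le> sqrt z" "0 \<le> eps powr b" using z by simp_all
  have "eps powr b \<le> L powr p * eps powr b" "sqrt z \<le> L powr p * sqrt z"
    using Lp s by (simp_all add: mult_le_cancel_right1)
  moreover have "0 \<le> L powr p * eps powr b" "0 \<le> L powr p * sqrt z" using s by simp_all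
  ultimately have M: "eps powr b \<le> M" "L powr p * sqrt z \<le> M" "sqrt z \<le> M" "0 \<le> M"
    unfolding M_def distrib_left by linarith+
  have c: "0 \<le> (4 * p) powr p" "0 \<le> (4 * b) powr p" "0 \<le> K powr p" by simp_all
  consider "z = 0" | "0 < z" "z \<le> eps powr (4 * b)" | "eps powr (4 * b) \<le> z" "z \<le> 1" | "1 \<le> z"
    using z by linarith
  then have "\<exists>c \<in> {(4 * p) powr p, (4 * b) powr p, K powr p}. sqrt z * \<bar>ln z\<bar> powr p \<le> c * M"
  proof cases
    case 1
    then show ?thesis using M c by auto
  next
    case 2
    have "eps \<le> 1" using eps exp_le_one_iff[of "- 1"] by linarith
    then have "eps powr (4 * b) \<le> 1" using eps b by (intro powr_le1) auto
    then have "sqrt z * \<bar>ln z\<bar> powr p \<le> (4 * p) powr p * z powr (1/4)"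
      using 2 p by (intro sqrt_mult_abs_ln_powr_le_root4) auto
    also have "z powr (1/4) \<le> eps powr b"
      using 2 powr_mono2[of "1/4" z "eps powr (4 * b)"] by (simp add: powr_powr)
    then have "(4 * p) powr p * z powr (1/4) \<le> (4 * p) powr p * M"
      using M(1) c(1) by (intro mult_left_mono) auto
    finally show ?thesis by blast
  next
    case 3
    have "0 < z" using 3 eps by (smt (verit) powr_gt_zero)
    then have "ln (eps powr (4 * b)) \<le> ln z" using 3 eps by (subst ln_le_cancel_iff) auto
    then have "\<bar>ln z\<bar> \<le> - ln (eps powr (4 * b))" using 3 \<open>0 < z\<close> by simp
    also have "\<dots> = 4 * b * L" using eps L by (simp add: ln_powr)
    finally have "\<bar>ln z\<bar> powr p \<le> (4 * b * L) powr p"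
      using p by (intro powr_mono2) auto
    then have "sqrt z * \<bar>ln z\<bar> powr p \<le> (4 * b) powr p * (L powr p * sqrt z)"
      using z by (simp add: powr_mult mult_ac mult_left_mono)
    also have "\<dots> \<le> (4 * b) powr p * M" using M(2) c(2) by (rule mult_left_mono)
    finally show ?thesis by blast
  next
    case 4
    have "\<bar>ln z\<bar> \<le> K" using 4 z ln_le_minus_one[of z] by simp
    then have "\<bar>ln z\<bar> powr p \<le> K powr p" using p by (intro powr_mono2) auto
    then have "sqrt z * \<bar>ln z\<bar> powr p \<le> K powr p * sqrt z"
      using z by (simp add: mult.commute mult_left_mono)
    also have "\<dots> \<le> K powr p * M" using M(3) c(3) by (rule mult_left_mono)
    finally show ?thesis by blast
  qed
  moreover have "(4 * p) powr p \<le> log_weight_const p b K" "(4 * b) powr p \<le> log_weight_const p b K"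
    "K powr p \<le> log_weight_const p b K"
    using c by (simp_all add: log_weight_const_def)
  ultimately obtain c where "c \<le> log_weight_const p b K" "sqrt z * \<bar>ln z\<bar> powr p \<le> c * M"
    by blast
  then have "sqrt z * \<bar>ln z\<bar> powr p \<le> log_weight_const p b K * M"
    using M(4) by (meson order_trans mult_right_mono)
  then show ?thesis by (simp add: M_def L_def mult_ac)
qed

definition duality_const :: "real \<Rightarrow> real \<Rightarrow> real" where
  "duality_const b g = sqrt (2 * (1 + (ln (1 + 2 * g) + 2 * b) / g) * (ln 3 + 2 * b) / g)"

lemma ln_one_plus_div_powr_le:
  fixes a b eps :: real
  assumes a: "a \<ge> 0" and b: "b > 0" and eps: "0 < eps" "eps \<le> exp (- 1)"
  shows "ln (1 + a / eps powr (2 * b)) \<le> (ln (1 + a) + 2 * b) * \<bar>ln eps\<bar>"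
proof -
  define k where "k = eps powr (2 * b)"
  have "ln eps \<le> - 1" using ln_le_neg_one[OF eps] .
  then have L: "\<bar>ln eps\<bar> = - ln eps" "\<bar>ln eps\<bar> \<ge> 1" by auto
  have "eps \<le> 1" using eps exp_le_one_iff[of "- 1"] by linarith
  then have k: "0 < k" "k \<le> 1" using eps b by (auto simp: k_def intro: powr_le1)
  have "1 + a / k \<le> (1 + a) / k" using k by (simp add: field_simps)
  then have "ln (1 + a / k) \<le> ln ((1 + a) / k)" using a k by (simp add: add_pos_nonneg)
  also have "\<dots> = ln (1 + a) + 2 * b * \<bar>ln eps\<bar>" using a k eps L by (simp add: ln_div k_def ln_powr)
  also have "\<dots> \<le> (ln (1 + a) + 2 * b) * \<bar>ln eps\<bar>"
  proof -
    have "ln (1 + a) * 1 \<le> ln (1 + a) * \<bar>ln eps\<bar>" by (rule mult_left_mono) (use L a in auto)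
    then show ?thesis by (simp add: distrib_right)
  qed
  finally show ?thesis unfolding k_def .
qed

lemma sqrt_duality_factor_le:
  fixes b g eps :: real
  assumes b: "b > 0" and g: "g > 0" and eps: "0 < eps" "eps \<le> exp (- 1)"
  defines "k \<equiv> (eps powr b)\<^sup>2"
  shows "sqrt (2 * max 1 (ln (1 + 2 * g / k) / g) * ln (1 + 2 / k) / g)
    \<le> duality_const b g * \<bar>ln eps\<bar>"
proof -
  define D where "D = (ln (1 + 2 * g) + 2 * b) / g"
  define L where "L = \<bar>ln eps\<bar>"
  have k: "k = eps powr (2 * b)" "k > 0"
    using eps powr_power[of eps b 2] by (simp_all add: k_def)
  have "ln eps \<le> - 1" using ln_le_neg_one[OF eps] .
  then have L: "L \<ge> 1" by (simp add: L_def)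
  have D: "D \<ge> 0" using g b by (simp add: D_def)
  have "ln (1 + 2 / k) \<le> (ln 3 + 2 * b) * L"
    using ln_one_plus_div_powr_le[of 2 b eps] b eps by (simp add: k L_def)
  moreover have "max 1 (ln (1 + 2 * g / k) / g) \<le> (1 + D) * L"
  proof (intro max.boundedI)
    have "0 \<le> D * L" using D L by simp
    then show "1 \<le> (1 + D) * L" using L by (simp add: distrib_right)
    have "ln (1 + 2 * g / k) / g \<le> D * L"
      using ln_one_plus_div_powr_le[of "2 * g" b eps] b eps g
      by (simp add: k L_def D_def divide_right_mono)
    then show "ln (1 + 2 * g / k) / g \<le> (1 + D) * L" using \<open>0 \<le> D * L\<close> L
      by (simp add: distrib_right)
  qed
  moreover have "0 \<le> ln (1 + 2 / k)" using k by simp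
  ultimately have "2 * max 1 (ln (1 + 2 * g / k) / g) * ln (1 + 2 / k) / g
      \<le> 2 * ((1 + D) * L) * ((ln 3 + 2 * b) * L) / g"
    using g by (intro divide_right_mono mult_mono mult_left_mono) auto
  also have "\<dots> = (2 * (1 + D) * (ln 3 + 2 * b) / g) * L\<^sup>2" by (simp add: power2_eq_square)
  finally have "sqrt (2 * max 1 (ln (1 + 2 * g / k) / g) * ln (1 + 2 / k) / g)
      \<le> sqrt ((2 * (1 + D) * (ln 3 + 2 * b) / g) * L\<^sup>2)"
    by (rule real_sqrt_le_mono)
  also have "\<dots> = duality_const b g * L"
    using L unfolding real_sqrt_mult duality_const_def D_def by simp
  finally show ?thesis unfolding L_def .
qed

lemma set_integral_nonneg:
  fixes f :: "'a \<Rightarrow> real"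
  assumes "\<And>x. x \<in> A \<Longrightarrow> 0 \<le> f x"
  shows "0 \<le> (LINT x:A|M. f x)"
  unfolding set_lebesgue_integral_def using assms
  by (intro Bochner_Integration.integral_nonneg) (auto simp: indicator_def)

text \<open>Unlike \<open>set_integral_norm_bound\<close>, no integrability is needed: a non-integrable
  function has integral \<open>0\<close>.\<close>
lemma set_integral_norm_le:
  fixes f :: "'a \<Rightarrow> 'b::{banach, second_countable_topology}"
  shows "norm (LINT x:A|M. f x) \<le> (LINT x:A|M. norm (f x))"
proof -
  have "(\<lambda>x. norm (indicator A x *\<^sub>R f x)) = (\<lambda>x. indicator A x *\<^sub>R norm (f x))"
    by (auto simp: indicator_def fun_eq_iff)
  then show ?thesis
    using integral_norm_bound[of M "\<lambda>x. indicator A x *\<^sub>R f x"]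
    unfolding set_lebesgue_integral_def by simp
qed

lemma set_integral_mono_nonneg:
  fixes f g :: "'a \<Rightarrow> real"
  assumes g: "set_integrable M A g" and fg: "\<And>x. x \<in> A \<Longrightarrow> 0 \<le> f x \<and> f x \<le> g x"
  shows "(LINT x:A|M. f x) \<le> (LINT x:A|M. g x)"
proof (cases "set_integrable M A f")
  case True
  then show ?thesis using g fg by (intro set_integral_mono) auto
next
  case False
  then have "(LINT x:A|M. f x) = 0"
    unfolding set_lebesgue_integral_def set_integrable_def by (simp add: not_integrable_integral_eq)
  moreover have "0 \<le> (LINT x:A|M. g x)" using fg by (intro set_integral_nonneg) (meson order_trans)
  ultimately show ?thesis by simp
qed

text \<open>Cauchy--Schwarz, obtained by integrating \<open>\<phi> \<le> \<surd>(u v) \<le> l u + v / (4 l)\<close> and optimising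
  over \<open>l\<close>.\<close>
lemma set_integral_le_sqrt_mult_sqrt:
  fixes \<phi> u v :: "'a \<Rightarrow> real"
  assumes u: "set_integrable M A u" and v: "set_integrable M A v"
    and nonneg: "\<And>x. x \<in> A \<Longrightarrow> 0 \<le> u x \<and> 0 \<le> v x \<and> 0 \<le> \<phi> x"
    and sq: "\<And>x. x \<in> A \<Longrightarrow> (\<phi> x)\<^sup>2 \<le> u x * v x"
  shows "(LINT x:A|M. \<phi> x) \<le> sqrt (LINT x:A|M. u x) * sqrt (LINT x:A|M. v x)"
proof -
  have "(LINT x:A|M. \<phi> x) \<le> l * (LINT x:A|M. u x) + (LINT x:A|M. v x) / 4 / l" if l: "l > 0" for l
  proof -
    have "\<phi> x \<le> l * u x + v x / (4 * l)" if x: "x \<in> A" for x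
    proof -
      have "\<phi> x \<le> sqrt (u x) * sqrt (v x)"
        using nonneg[OF x] sq[OF x] by (simp add: real_le_rsqrt real_sqrt_mult[symmetric])
      also have "\<dots> \<le> l * (sqrt (u x))\<^sup>2 + (sqrt (v x))\<^sup>2 / (4 * l)"
        by (rule mult_le_scaled_squares[OF l])
      finally show ?thesis using nonneg[OF x] by simp
    qed
    moreover have "set_integrable M A (\<lambda>x. l * u x + v x / (4 * l))"
      using u v by (intro set_integral_add(1) set_integrable_mult_right set_integrable_divide)
    ultimately have "(LINT x:A|M. \<phi> x) \<le> (LINT x:A|M. l * u x + v x / (4 * l))"
      using nonneg by (intro set_integral_mono_nonneg) auto
    also have "\<dots> = l * (LINT x:A|M. u x) + (LINT x:A|M. v x) / 4 / l"
      using u v by (simp add: set_integral_add set_integral_divide_zero)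
    finally show ?thesis .
  qed
  moreover have "0 \<le> (LINT x:A|M. u x)" "0 \<le> (LINT x:A|M. v x)"
    using nonneg by (auto intro: set_integral_nonneg)
  ultimately have "(LINT x:A|M. \<phi> x) \<le> 2 * sqrt ((LINT x:A|M. u x) * ((LINT x:A|M. v x) / 4))"
    by (intro le_two_sqrt_mult_if_le_scaled_sum) auto
  also have "\<dots> = sqrt (LINT x:A|M. u x) * sqrt (LINT x:A|M. v x)"
    by (simp add: real_sqrt_mult real_sqrt_divide)
  finally show ?thesis .
qed

lemma set_integral_inverse_affine:
  fixes g k y :: real
  assumes g: "g > 0" and k: "k > 0" and y: "y \<ge> 0"
  shows "set_integrable lborel {0..y} (\<lambda>s. 1 / (g * s + k))"
    and "(LINT s:{0..y}|lborel. 1 / (g * s + k)) = ln (1 + g * y / k) / g"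
proof -
  have pos: "g * s + k > 0" if "s \<ge> 0" for s using g k that by (simp add: add_nonneg_pos)
  have cont: "continuous_on {0..y} (\<lambda>s. 1 / (g * s + k))"
    using pos by (intro continuous_intros) (auto simp: less_imp_neq[symmetric])
  then show "set_integrable lborel {0..y} (\<lambda>s. 1 / (g * s + k))"
    by (rule borel_integrable_atLeastAtMost')
  have "(LINT s:{0..y}|lborel. 1 / (g * s + k)) = ln (g * y + k) / g - ln (g * 0 + k) / g"
    unfolding set_lebesgue_integral_def
  proof (rule integral_FTC_atLeastAtMost[OF y _ cont])
    fix x :: real assume "0 \<le> x" "x \<le> y"
    then have "((\<lambda>s. ln (g * s + k) / g) has_real_derivative 1 / (g * x + k)) (at x)"
      using pos[of x] g by (auto intro!: derivative_eq_intros)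
    then show "((\<lambda>s. ln (g * s + k) / g) has_vector_derivative 1 / (g * x + k)) (at x within {0..y})"
      by (simp add: has_real_derivative_iff_has_vector_derivative[symmetric] has_field_derivative_at_within)
  qed
  also have "\<dots> = ln ((g * y + k) / k) / g"
    using pos[OF y] k by (simp add: diff_divide_distrib ln_div)
  also have "(g * y + k) / k = 1 + g * y / k" using k by (simp add: field_simps)
  finally show "(LINT s:{0..y}|lborel. 1 / (g * s + k)) = ln (1 + g * y / k) / g" .
qed

lemma set_integral_mono_set:
  fixes f :: "'a \<Rightarrow> real"
  assumes f: "set_integrable M A f" and B: "B \<in> sets M" "B \<subseteq> A"
    and nonneg: "\<And>x. x \<in> A \<Longrightarrow> 0 \<le> f x"
  shows "(LINT x:B|M. f x) \<le> (LINT x:A|M. f x)"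
  using f set_integrable_subset[OF f B] B nonneg
  unfolding set_lebesgue_integral_def set_integrable_def
  by (intro integral_mono) (auto simp: indicator_def)

lemma L2norm_nonneg: "0 \<le> L2norm f"
  unfolding L2norm_def by (simp add: set_integral_nonneg)

lemma L2norm_sqrt_weight:
  assumes "\<And>y. 0 \<le> W y"
  shows "L2norm (\<lambda>y. complex_of_real (sqrt (W y)) * h y)
    = sqrt (LINT y:{0..}|lborel. W y * (cmod (h y))\<^sup>2)"
  using assms unfolding L2norm_def by (simp add: norm_mult power_mult_distrib)

lemma set_integrable_bounded_weight_mult:
  assumes h: "in_L2 h" and W: "W \<in> borel_measurable borel"
    and bounds: "\<And>y. 0 \<le> W y" "\<And>y. W y \<le> K"
  shows "set_integrable lborel {0..} (\<lambda>y. W y * (cmod (h y))\<^sup>2)"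
proof (rule set_integrable_bound)
  show "set_integrable lborel {0..} (\<lambda>y. K * (cmod (h y))\<^sup>2)"
    using h unfolding in_L2_def by simp
  have [measurable]: "(\<lambda>x. indicator {0..} x *\<^sub>R h x) \<in> borel_measurable lborel" "W \<in> borel_measurable lborel"
    using h W unfolding in_L2_def set_borel_measurable_def by simp_all
  have "(\<lambda>x. indicator {0..} x *\<^sub>R (W x * (cmod (h x))\<^sup>2))
      = (\<lambda>x. W x * (cmod (indicator {0..} x *\<^sub>R h x))\<^sup>2)"
    by (auto simp: indicator_def fun_eq_iff)
  then show "set_borel_measurable lborel {0..} (\<lambda>y. W y * (cmod (h y))\<^sup>2)"
    unfolding set_borel_measurable_def by (simp only:) measurable
  show "AE y in lborel. y \<in> {0..} \<longrightarrow> norm (W y * (cmod (h y))\<^sup>2) \<le> norm (K * (cmod (h y))\<^sup>2)"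
    using bounds order_trans[OF bounds] by (auto intro!: mult_right_mono)
qed

lemma L2norm_le_mult:
  assumes g: "set_integrable lborel {0..} (\<lambda>y. (cmod (g y))\<^sup>2)" and c: "c \<ge> 0"
    and le: "\<And>y. y \<ge> 0 \<Longrightarrow> cmod (f y) \<le> c * cmod (g y)"
  shows "L2norm f \<le> c * L2norm g"
proof -
  have "(cmod (f y))\<^sup>2 \<le> c\<^sup>2 * (cmod (g y))\<^sup>2" if "y \<ge> 0" for y
    using le[OF that] by (metis norm_ge_zero power_mono power_mult_distrib)
  then have "(LINT y:{0..}|lborel. (cmod (f y))\<^sup>2) \<le> (LINT y:{0..}|lborel. c\<^sup>2 * (cmod (g y))\<^sup>2)"
    using g by (intro set_integral_mono_nonneg) auto
  then have "L2norm f \<le> sqrt (c\<^sup>2 * (LINT y:{0..}|lborel. (cmod (g y))\<^sup>2))"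
    unfolding L2norm_def by simp
  then show ?thesis using c by (simp add: real_sqrt_mult L2norm_def)
qed

lemma L2norm_sqrt_add_le:
  assumes h: "in_L2 h" and W: "set_integrable lborel {0..} (\<lambda>y. W y * (cmod (h y))\<^sup>2)"
    and nonneg: "\<And>y. 0 \<le> W y" and k: "k \<ge> 0"
  shows "L2norm (\<lambda>y. complex_of_real (sqrt (W y + k)) * h y)
    \<le> L2norm (\<lambda>y. complex_of_real (sqrt (W y)) * h y) + sqrt k * L2norm h"
proof -
  define A where "A = (LINT y:{0..}|lborel. W y * (cmod (h y))\<^sup>2)"
  define B where "B = (LINT y:{0..}|lborel. (cmod (h y))\<^sup>2)"
  have hi: "set_integrable lborel {0..} (\<lambda>y. (cmod (h y))\<^sup>2)" using h unfolding in_L2_def by simp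
  have "(LINT y:{0..}|lborel. (W y + k) * (cmod (h y))\<^sup>2) = A + k * B"
    using W hi unfolding A_def B_def by (simp add: distrib_right)
  moreover have "0 \<le> A" "0 \<le> B" unfolding A_def B_def using nonneg by (auto intro: set_integral_nonneg)
  ultimately have "L2norm (\<lambda>y. complex_of_real (sqrt (W y + k)) * h y) = sqrt (A + k * B)"
    using nonneg k by (subst L2norm_sqrt_weight) (auto intro: add_nonneg_nonneg)
  also have "\<dots> \<le> sqrt A + sqrt (k * B)"
    using \<open>0 \<le> A\<close> \<open>0 \<le> B\<close> k by (simp add: sqrt_add_le_add_sqrt)
  also have "sqrt A = L2norm (\<lambda>y. complex_of_real (sqrt (W y)) * h y)"
    unfolding A_def by (rule L2norm_sqrt_weight[OF nonneg, symmetric])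
  also have "sqrt (k * B) = sqrt k * L2norm h" unfolding B_def L2norm_def by (rule real_sqrt_mult)
  finally show ?thesis .
qed

locale cutoff_weight =
  fixes Z :: "real \<Rightarrow> real" and K g :: real
  assumes measurable: "Z \<in> borel_measurable borel"
    and nonneg: "0 \<le> Z y" and bounded: "Z y \<le> K"
    and g_pos: "g > 0" and ge_linear: "y \<in> {0..2} \<Longrightarrow> g * y \<le> Z y"
begin

lemma set_integrable_shifted_weight:
  assumes "in_L2 h" "k \<ge> 0"
  shows "set_integrable lborel {0..} (\<lambda>y. (Z y + k) * (cmod (h y))\<^sup>2)"
  using assms nonneg bounded measurable
  by (intro set_integrable_bounded_weight_mult[where K = "K + k"]) (auto intro: add_nonneg_nonneg)

text \<open>A Hardy-type bound: on \<open>[0, 2]\<close> the weight \<open>Z + k\<close> is at least \<open>g y + k\<close>,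
  whose reciprocal integrates to a logarithm.\<close>
lemma norm_prim_le:
  assumes h: "in_L2 h" and k: "k > 0" and y: "y \<in> {0..2}"
  shows "cmod (prim h y)
    \<le> sqrt (ln (1 + g * y / k) / g) * L2norm (\<lambda>s. complex_of_real (sqrt (Z s + k)) * h s)"
proof -
  have Zk: "set_integrable lborel {0..} (\<lambda>s. (Z s + k) * (cmod (h s))\<^sup>2)"
    using set_integrable_shifted_weight h k by simp
  have pos: "0 < g * s + k" "g * s + k \<le> Z s + k" if "s \<in> {0..y}" for s
    using that y g_pos k ge_linear[of s] by (auto intro: add_nonneg_pos)
  have "cmod (prim h y) \<le> (LINT s:{0..y}|lborel. cmod (h s))"
    unfolding prim_def by (rule set_integral_norm_le)
  also have "\<dots> \<le> sqrt (LINT s:{0..y}|lborel. (Z s + k) * (cmod (h s))\<^sup>2)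
      * sqrt (LINT s:{0..y}|lborel. 1 / (g * s + k))"
  proof (rule set_integral_le_sqrt_mult_sqrt)
    show "set_integrable lborel {0..y} (\<lambda>s. (Z s + k) * (cmod (h s))\<^sup>2)"
      by (rule set_integrable_subset[OF Zk]) auto
    show "set_integrable lborel {0..y} (\<lambda>s. 1 / (g * s + k))"
      using y g_pos k by (intro set_integral_inverse_affine) auto
    fix s assume s: "s \<in> {0..y}"
    show "0 \<le> (Z s + k) * (cmod (h s))\<^sup>2 \<and> 0 \<le> 1 / (g * s + k) \<and> 0 \<le> cmod (h s)"
      using pos[OF s] nonneg[of s] k by simp
    have "1 \<le> (Z s + k) / (g * s + k)" using pos[OF s] by simp
    then have "(cmod (h s))\<^sup>2 * 1 \<le> (cmod (h s))\<^sup>2 * ((Z s + k) / (g * s + k))"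
      by (rule mult_left_mono) simp
    then show "(cmod (h s))\<^sup>2 \<le> (Z s + k) * (cmod (h s))\<^sup>2 * (1 / (g * s + k))"
      by (simp add: field_simps)
  qed
  finally have CS: "cmod (prim h y) \<le> sqrt (LINT s:{0..y}|lborel. (Z s + k) * (cmod (h s))\<^sup>2)
      * sqrt (ln (1 + g * y / k) / g)"
    using y g_pos k by (simp add: set_integral_inverse_affine)
  have "(LINT s:{0..y}|lborel. (Z s + k) * (cmod (h s))\<^sup>2)
      \<le> (LINT s:{0..}|lborel. (Z s + k) * (cmod (h s))\<^sup>2)"
    using nonneg k by (intro set_integral_mono_set[OF Zk]) (auto intro: add_nonneg_nonneg)
  then have "cmod (prim h y) \<le> sqrt (LINT s:{0..}|lborel. (Z s + k) * (cmod (h s))\<^sup>2)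
      * sqrt (ln (1 + g * y / k) / g)"
    by (rule order_trans[OF CS mult_right_mono[OF real_sqrt_le_mono]]) (use y g_pos k in simp)
  moreover have "L2norm (\<lambda>s. complex_of_real (sqrt (Z s + k)) * h s)
      = sqrt (LINT s:{0..}|lborel. (Z s + k) * (cmod (h s))\<^sup>2)"
    using nonneg k by (intro L2norm_sqrt_weight add_nonneg_nonneg) auto
  ultimately show ?thesis by (simp add: mult.commute)
qed

lemma norm_prim_sq_le:
  assumes h: "in_L2 h" and k: "k > 0" and y: "y \<in> {0..2}"
  shows "(cmod (prim h y))\<^sup>2 \<le> Z y * (2 * max 1 (ln (1 + 2 * g / k) / g) / (g * (y + k)))
    * (L2norm (\<lambda>s. complex_of_real (sqrt (Z s + k)) * h s))\<^sup>2"
proof -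
  define La where "La = ln (1 + 2 * g / k) / g"
  have y0: "0 \<le> y" "y \<le> 2" using y by auto
  have gyk: "0 \<le> g * y / k" using g_pos k y0 by simp
  have "ln (1 + g * y / k) / g \<le> (g * y / k) / g"
    using ln_add_one_self_le_self[OF gyk] g_pos by (intro divide_right_mono) auto
  moreover have "ln (1 + g * y / k) / g \<le> La"
  proof -
    have "g * y / k \<le> 2 * g / k" using g_pos k y0 by (intro divide_right_mono) auto
    then show ?thesis unfolding La_def using g_pos gyk by (intro divide_right_mono) auto
  qed
  ultimately have "ln (1 + g * y / k) / g \<le> min (y / k) La" using g_pos by simp
  also have "\<dots> \<le> 2 * y * max 1 La / (y + k)"
    using y0 k g_pos by (intro min_le_two_mult_max_div) (auto simp: La_def)
  also have "\<dots> = g * y * (2 * max 1 La / (g * (y + k)))" using g_pos by simp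
  also have "\<dots> \<le> Z y * (2 * max 1 La / (g * (y + k)))"
    using ge_linear[OF y] g_pos k y0 by (intro mult_right_mono) auto
  finally have ln_le: "ln (1 + g * y / k) / g \<le> Z y * (2 * max 1 La / (g * (y + k)))" .
  have "(cmod (prim h y))\<^sup>2
      \<le> (sqrt (ln (1 + g * y / k) / g) * L2norm (\<lambda>s. complex_of_real (sqrt (Z s + k)) * h s))\<^sup>2"
    using norm_prim_le[OF h k y] by (intro power_mono) auto
  also have "\<dots> = ln (1 + g * y / k) / g * (L2norm (\<lambda>s. complex_of_real (sqrt (Z s + k)) * h s))\<^sup>2"
    using g_pos k y0 by (simp add: power_mult_distrib)
  also have "\<dots> \<le> Z y * (2 * max 1 La / (g * (y + k)))
      * (L2norm (\<lambda>s. complex_of_real (sqrt (Z s + k)) * h s))\<^sup>2"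
    using ln_le by (rule mult_right_mono) simp
  finally show ?thesis unfolding La_def .
qed

lemma norm_inner_prim_le:
  assumes h: "in_L2 h" and R: "in_L2 R" and supp: "\<And>y. y \<notin> {0..2} \<Longrightarrow> R y = 0" and k: "k > 0"
  shows "cmod (inner0 R (prim h))
    \<le> sqrt (2 * max 1 (ln (1 + 2 * g / k) / g) * ln (1 + 2 / k) / g)
      * L2norm (\<lambda>y. complex_of_real (sqrt (Z y)) * R y)
      * L2norm (\<lambda>y. complex_of_real (sqrt (Z y + k)) * h y)"
proof -
  define c where "c = 2 * max 1 (ln (1 + 2 * g / k) / g) / g"
  define N where "N = L2norm (\<lambda>y. complex_of_real (sqrt (Z y + k)) * h y)"
  have c: "c \<ge> 0" using g_pos by (simp add: c_def)
  have ZR: "set_integrable lborel {0..} (\<lambda>y. Z y * (cmod (R y))\<^sup>2)"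
    by (rule set_integrable_bounded_weight_mult[OF R measurable nonneg bounded])
  have "inner0 R (prim h) = (LINT y:{0..2}|lborel. R y * cnj (prim h y))"
    unfolding inner0_def set_lebesgue_integral_def
    by (intro Bochner_Integration.integral_cong) (auto simp: indicator_def supp)
  then have "cmod (inner0 R (prim h)) \<le> (LINT y:{0..2}|lborel. cmod (R y * cnj (prim h y)))"
    by (simp only: set_integral_norm_le)
  also have "\<dots> \<le> sqrt (LINT y:{0..2}|lborel. Z y * (cmod (R y))\<^sup>2)
      * sqrt (LINT y:{0..2}|lborel. c * N\<^sup>2 * (1 / (1 * y + k)))"
  proof (rule set_integral_le_sqrt_mult_sqrt)
    show "set_integrable lborel {0..2} (\<lambda>y. Z y * (cmod (R y))\<^sup>2)"
      by (rule set_integrable_subset[OF ZR]) auto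
    show "set_integrable lborel {0..2} (\<lambda>y. c * N\<^sup>2 * (1 / (1 * y + k)))"
      using k by (intro set_integrable_mult_right set_integral_inverse_affine) auto
    fix y :: real assume y: "y \<in> {0..2}"
    show "0 \<le> Z y * (cmod (R y))\<^sup>2 \<and> 0 \<le> c * N\<^sup>2 * (1 / (1 * y + k)) \<and> 0 \<le> cmod (R y * cnj (prim h y))"
      using nonneg[of y] c y k by simp
    have "(cmod (R y * cnj (prim h y)))\<^sup>2 = (cmod (R y))\<^sup>2 * (cmod (prim h y))\<^sup>2"
      by (simp add: norm_mult power_mult_distrib)
    also have "\<dots> \<le> (cmod (R y))\<^sup>2 * (Z y * (c / (y + k)) * N\<^sup>2)"
      using norm_prim_sq_le[OF h k y] g_pos by (intro mult_left_mono) (simp_all add: c_def N_def)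
    finally show "(cmod (R y * cnj (prim h y)))\<^sup>2 \<le> Z y * (cmod (R y))\<^sup>2 * (c * N\<^sup>2 * (1 / (1 * y + k)))"
      by (simp add: field_simps)
  qed
  also have "(LINT y:{0..2}|lborel. c * N\<^sup>2 * (1 / (1 * y + k))) = c * ln (1 + 2 / k) * N\<^sup>2"
    using k set_integral_inverse_affine(2)[of 1 k 2] by (simp only: set_integral_mult_right) simp
  finally have CS: "cmod (inner0 R (prim h))
      \<le> sqrt (LINT y:{0..2}|lborel. Z y * (cmod (R y))\<^sup>2) * sqrt (c * ln (1 + 2 / k) * N\<^sup>2)" .
  have "(LINT y:{0..2}|lborel. Z y * (cmod (R y))\<^sup>2) \<le> (LINT y:{0..}|lborel. Z y * (cmod (R y))\<^sup>2)"
    using nonneg by (intro set_integral_mono_set[OF ZR]) auto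
  then have "cmod (inner0 R (prim h))
      \<le> sqrt (LINT y:{0..}|lborel. Z y * (cmod (R y))\<^sup>2) * sqrt (c * ln (1 + 2 / k) * N\<^sup>2)"
    by (rule order_trans[OF CS mult_right_mono[OF real_sqrt_le_mono]]) (use c k in simp)
  also have "\<dots> = sqrt (c * ln (1 + 2 / k)) * L2norm (\<lambda>y. complex_of_real (sqrt (Z y)) * R y) * N"
    using nonneg by (simp add: L2norm_sqrt_weight real_sqrt_mult N_def L2norm_nonneg)
  finally show ?thesis by (simp add: c_def N_def)
qed

lemma L2norm_log_weight_le:
  assumes h: "in_L2 h" and p: "p \<ge> 1" and b: "b > 0" and K: "K \<ge> 1"
    and eps: "0 < eps" "eps \<le> exp (- 1)"
  shows "L2norm (\<lambda>y. complex_of_real (sqrt (Z y) * \<bar>ln (Z y)\<bar> powr p) * h y)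
    \<le> sqrt 2 * log_weight_const p b K * \<bar>ln eps\<bar> powr p
      * (L2norm (\<lambda>y. complex_of_real (sqrt (Z y)) * h y) + eps powr b * L2norm h)"
proof -
  define A where "A = log_weight_const p b K * \<bar>ln eps\<bar> powr p"
  define k where "k = (eps powr b)\<^sup>2"
  have A: "A \<ge> 0" using K log_weight_const_pos[of K p b] by (simp add: A_def)
  have k: "k \<ge> 0" "sqrt k = eps powr b" by (simp_all add: k_def)
  have "L2norm (\<lambda>y. complex_of_real (sqrt (Z y) * \<bar>ln (Z y)\<bar> powr p) * h y)
      \<le> (sqrt 2 * A) * L2norm (\<lambda>y. complex_of_real (sqrt (Z y + k)) * h y)"
  proof (rule L2norm_le_mult)
    show "set_integrable lborel {0..} (\<lambda>y. (cmod (complex_of_real (sqrt (Z y + k)) * h y))\<^sup>2)"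
      using set_integrable_shifted_weight[OF h k(1)] nonneg k
      by (simp add: norm_mult power_mult_distrib add_nonneg_nonneg)
    show "0 \<le> sqrt 2 * A" using A by simp
    fix y :: real
    have "sqrt (Z y) * \<bar>ln (Z y)\<bar> powr p \<le> A * (sqrt (Z y) + eps powr b)"
      unfolding A_def using sqrt_mult_abs_ln_powr_le[OF p b K eps nonneg bounded] .
    also have "\<dots> \<le> A * (sqrt 2 * sqrt (Z y + k))"
      using A nonneg[of y] by (intro mult_left_mono) (simp_all add: k_def sqrt_add_le_sqrt_two_mult)
    finally have "(sqrt (Z y) * \<bar>ln (Z y)\<bar> powr p) * cmod (h y) \<le> (A * (sqrt 2 * sqrt (Z y + k))) * cmod (h y)"
      by (rule mult_right_mono) simp
    then show "cmod (complex_of_real (sqrt (Z y) * \<bar>ln (Z y)\<bar> powr p) * h y)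
        \<le> sqrt 2 * A * cmod (complex_of_real (sqrt (Z y + k)) * h y)"
      using nonneg[of y] k by (simp add: norm_mult mult_ac add_nonneg_nonneg)
  qed
  also have "\<dots> \<le> (sqrt 2 * A) * (L2norm (\<lambda>y. complex_of_real (sqrt (Z y)) * h y) + eps powr b * L2norm h)"
    using A L2norm_sqrt_add_le[OF h _ nonneg k(1)] set_integrable_shifted_weight[OF h, of 0] k(2)
    by (intro mult_left_mono) auto
  finally show ?thesis by (simp add: A_def mult_ac)
qed

lemma norm_inner_prim_le_log:
  assumes h: "in_L2 h" and R: "in_L2 R" and supp: "\<And>y. y \<notin> {0..2} \<Longrightarrow> R y = 0"
    and b: "b > 0" and eps: "0 < eps" "eps \<le> exp (- 1)"
  shows "cmod (inner0 R (prim h))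
    \<le> duality_const b g * \<bar>ln eps\<bar> * L2norm (\<lambda>y. complex_of_real (sqrt (Z y)) * R y)
      * (L2norm (\<lambda>y. complex_of_real (sqrt (Z y)) * h y) + eps powr b * L2norm h)"
proof -
  define k where "k = (eps powr b)\<^sup>2"
  have k: "k > 0" "sqrt k = eps powr b" using eps by (simp_all add: k_def)
  have "cmod (inner0 R (prim h))
      \<le> sqrt (2 * max 1 (ln (1 + 2 * g / k) / g) * ln (1 + 2 / k) / g)
        * L2norm (\<lambda>y. complex_of_real (sqrt (Z y)) * R y)
        * L2norm (\<lambda>y. complex_of_real (sqrt (Z y + k)) * h y)"
    by (rule norm_inner_prim_le[OF h R supp k(1)])
  also have "\<dots> \<le> duality_const b g * \<bar>ln eps\<bar> * L2norm (\<lambda>y. complex_of_real (sqrt (Z y)) * R y)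
      * (L2norm (\<lambda>y. complex_of_real (sqrt (Z y)) * h y) + eps powr b * L2norm h)"
  proof (intro mult_mono)
    show "sqrt (2 * max 1 (ln (1 + 2 * g / k) / g) * ln (1 + 2 / k) / g) \<le> duality_const b g * \<bar>ln eps\<bar>"
      unfolding k_def by (rule sqrt_duality_factor_le[OF b g_pos eps])
    show "L2norm (\<lambda>y. complex_of_real (sqrt (Z y + k)) * h y)
        \<le> L2norm (\<lambda>y. complex_of_real (sqrt (Z y)) * h y) + eps powr b * L2norm h"
      using L2norm_sqrt_add_le[OF h set_integrable_bounded_weight_mult[OF h measurable nonneg bounded]
          nonneg, of k] k by simp
    have "0 \<le> duality_const b g" using b g_pos by (simp add: duality_const_def)
    then show "0 \<le> duality_const b g * \<bar>ln eps\<bar>" by simp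
    then show "0 \<le> duality_const b g * \<bar>ln eps\<bar> * L2norm (\<lambda>y. complex_of_real (sqrt (Z y)) * R y)"
      by (simp add: L2norm_nonneg)
  qed (simp_all add: L2norm_nonneg)
  finally show ?thesis .
qed

end

lemma Zw_eq_integral:
  assumes "continuous_on {0..} G" "y \<ge> 0"
  shows "Zw G y = integral {0..y} G" "G integrable_on {0..y}"
proof -
  have "continuous_on {0..y} G" using assms(1) by (rule continuous_on_subset) auto
  then show "Zw G y = integral {0..y} G" "G integrable_on {0..y}" unfolding Zw_def
    by (simp_all add: set_borel_integral_eq_integral(2)[OF borel_integrable_atLeastAtMost'] integrable_continuous_real)
qed

lemma Zw_eq_0: "y < 0 \<Longrightarrow> Zw G y = 0"
  unfolding Zw_def set_lebesgue_integral_def by simp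

context
  fixes G :: "real \<Rightarrow> real"
  assumes cont: "continuous_on {0..} G" and nonneg: "\<And>y. y \<ge> 0 \<Longrightarrow> G y \<ge> 0"
begin

lemma Zw_nonneg: "0 \<le> Zw G y"
  using integral_nonneg[OF Zw_eq_integral(2)[OF cont]] nonneg Zw_eq_integral(1)[OF cont]
  by (cases "y < 0") (auto simp: Zw_eq_0)

lemma mono_Zw: "mono (Zw G)"
proof (rule monoI)
  fix x y :: real assume "x \<le> y"
  show "Zw G x \<le> Zw G y"
  proof (cases "x < 0")
    case True then show ?thesis by (simp add: Zw_eq_0 Zw_nonneg)
  next
    case False
    with \<open>x \<le> y\<close> have "integral {0..x} G \<le> integral {0..y} G"
      by (intro integral_subset_le Zw_eq_integral(2)[OF cont]) (auto intro: nonneg)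
    then show ?thesis using False \<open>x \<le> y\<close> by (simp add: Zw_eq_integral(1)[OF cont])
  qed
qed

lemma Zw_le:
  assumes le: "\<And>y. y \<in> {0..2} \<Longrightarrow> G y \<le> c" and vanish: "\<And>y. y \<ge> 2 \<Longrightarrow> G y = 0"
  shows "Zw G y \<le> 2 * c"
proof -
  have c: "c \<ge> 0" using le[of 0] nonneg[of 0] by simp
  have "Zw G y \<le> Zw G 2" if "y \<le> 2" using mono_Zw that by (rule monoD)
  moreover have "Zw G y = Zw G 2" if "y \<ge> 2"
  proof -
    have "integral {0..2} G + integral {2..y} G = integral {0..y} G"
      using that by (intro Henstock_Kurzweil_Integration.integral_combine Zw_eq_integral(2)[OF cont]) auto
    moreover have "integral {2..y} G = integral {2..y} (\<lambda>_. 0::real)"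
      by (intro integral_cong) (simp add: vanish)
    ultimately show ?thesis using that by (simp add: Zw_eq_integral(1)[OF cont])
  qed
  moreover have "integral {0..2} G \<le> integral {0..2::real} (\<lambda>_. c)"
    by (intro integral_le Zw_eq_integral(2)[OF cont]) (auto intro: le)
  ultimately show ?thesis using c by (cases "y \<le> 2") (auto simp: Zw_eq_integral(1)[OF cont])
qed

lemma Zw_ge_linear:
  assumes ge: "\<And>y. y \<in> {0..3/2} \<Longrightarrow> c \<le> G y" and c: "c > 0" and y: "y \<in> {0..2}"
  shows "3/4 * c * y \<le> Zw G y"
proof -
  define m where "m = min y (3/2)"
  have m: "0 \<le> m" "m \<le> y" "m \<le> 3/2" "3/4 * y \<le> m" using y by (auto simp: m_def)
  have "3/4 * c * y \<le> m * c" using m(4) c by (simp add: mult.commute mult_right_mono)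
  also have "\<dots> = integral {0..m} (\<lambda>_. c)" using m by simp
  also have "\<dots> \<le> integral {0..m} G"
    using m by (intro integral_le Zw_eq_integral(2)[OF cont]) (auto intro: ge)
  also have "\<dots> \<le> integral {0..y} G"
    using m by (intro integral_subset_le Zw_eq_integral(2)[OF cont]) (auto intro: nonneg)
  finally show ?thesis using y by (simp add: Zw_eq_integral(1)[OF cont])
qed

end

lemma weight_fn_bounds:
  assumes "weight_fn Us Hs gu Cabs eps G"
  shows "continuous_on {0..} G" and "\<And>y. y \<ge> 0 \<Longrightarrow> G y \<ge> 0" and "\<And>y. y \<ge> 2 \<Longrightarrow> G y = 0"
    and "\<And>y. y \<in> {0..3/2} \<Longrightarrow> 1 / (2 * gu\<^sup>2) \<le> G y"
    and "\<And>y. y \<in> {0..2} \<Longrightarrow> G y \<le> 2 / gamma0 Us Hs"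
proof -
  obtain G' where der: "\<And>y. y \<ge> 0 \<Longrightarrow> (G has_real_derivative G' y) (at y within {0..})"
    and decr: "\<And>y. y \<in> {3/2..2} \<Longrightarrow> G' y \<le> 0"
    and bounds: "\<And>y. y \<in> {0..3/2} \<Longrightarrow> 1 / (2 * gu\<^sup>2) \<le> G y \<and> G y \<le> 2 / gamma0 Us Hs"
    and "\<And>y. y \<ge> 2 \<Longrightarrow> G y = 0" "\<And>y. y \<ge> 0 \<Longrightarrow> G y \<ge> 0"
    using assms unfolding weight_fn_def by metis
  then show "\<And>y. y \<ge> 2 \<Longrightarrow> G y = 0" "\<And>y. y \<ge> 0 \<Longrightarrow> G y \<ge> 0"
    "\<And>y. y \<in> {0..3/2} \<Longrightarrow> 1 / (2 * gu\<^sup>2) \<le> G y" by simp_all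
  show cont: "continuous_on {0..} G"
    unfolding continuous_on_eq_continuous_within using der by (auto intro: DERIV_continuous)
  fix y :: real assume y: "y \<in> {0..2}"
  show "G y \<le> 2 / gamma0 Us Hs"
  proof (cases "y \<le> 3/2")
    case True then show ?thesis using bounds y by simp
  next
    case False
    have "continuous_on {3/2..y} G" using cont by (rule continuous_on_subset) auto
    then have "G y \<le> G (3/2)"
    proof (rule DERIV_nonpos_imp_decreasing_open[rotated 2])
      show "3/2 \<le> y" using False by simp
      fix x :: real assume x: "3/2 < x" "x < y"
      have "at x within {0::real..} = at x" using x by (intro at_within_interior) simp
      then have "(G has_real_derivative G' x) (at x)" using der[of x] x by simp
      then show "\<exists>d. (G has_real_derivative d) (at x) \<and> d \<le> 0" using decr[of x] x y by auto
    qed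
    then show ?thesis using bounds[of "3/2"] by simp
  qed
qed

lemma weight_fn_cutoff_weight:
  assumes "weight_fn Us Hs gu Cabs eps G" "gu > 0" "gamma0 Us Hs > 0"
  shows "cutoff_weight (Zw G) (max 1 (4 / gamma0 Us Hs)) (3 / (8 * gu\<^sup>2))"
proof
  note G = weight_fn_bounds[OF assms(1)]
  show "Zw G \<in> borel_measurable borel" using mono_Zw[OF G(1,2)] by (rule borel_measurable_mono)
  show "0 \<le> Zw G y" for y by (rule Zw_nonneg[OF G(1,2)])
  show "Zw G y \<le> max 1 (4 / gamma0 Us Hs)" for y
    using Zw_le[OF G(1,2) G(5) G(3), of y] by simp
  show "0 < 3 / (8 * gu\<^sup>2)" using assms by simp
  show "3 / (8 * gu\<^sup>2) * y \<le> Zw G y" if "y \<in> {0..2}" for y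
    using Zw_ge_linear[OF G(1,2) G(4) _ that] assms by simp
qed

lemma log_weight_estimates:
  assumes profile: "shear_profile Us Hs UE HE gl gu" and p: "p \<ge> 1" and b: "b > 0"
  shows "\<exists>C>0. \<exists>eps0>0. \<forall>eps. 0 < eps \<and> eps < eps0 \<longrightarrow>
     (\<forall>G. weight_fn Us Hs gu Cabs eps G \<longrightarrow>
       (\<forall>h. in_L2 h \<longrightarrow>
          L2norm (\<lambda>y. complex_of_real (sqrt (Zw G y) * \<bar>ln (Zw G y)\<bar> powr p) * h y)
            \<le> C * \<bar>ln eps\<bar> powr p *
               (L2norm (\<lambda>y. complex_of_real (sqrt (Zw G y)) * h y) + eps powr b * L2norm h)
        \<and> (\<forall>R. in_L2 R \<and> (\<forall>y. y \<notin> {0..2} \<longrightarrow> R y = 0) \<longrightarrow>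
             cmod (inner0 R (prim h))
               \<le> C * \<bar>ln eps\<bar> powr p * L2norm (\<lambda>y. complex_of_real (sqrt (Zw G y)) * R y) *
                  (L2norm (\<lambda>y. complex_of_real (sqrt (Zw G y)) * h y) + eps powr b * L2norm h))))"
proof -
  have gu: "gu > 0" and gamma0: "gamma0 Us Hs > 0" using profile unfolding shear_profile_def by auto
  define K where "K = max 1 (4 / gamma0 Us Hs)"
  define g where "g = 3 / (8 * gu\<^sup>2)"
  define C where "C = max (sqrt 2 * log_weight_const p b K) (duality_const b g)"
  have K: "K \<ge> 1" by (simp add: K_def)
  have C: "C > 0" using log_weight_const_pos[of K p b] K by (simp add: C_def max.strict_coboundedI1)
  have part1: "L2norm (\<lambda>y. complex_of_real (sqrt (Zw G y) * \<bar>ln (Zw G y)\<bar> powr p) * h y)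
      \<le> C * \<bar>ln eps\<bar> powr p * (L2norm (\<lambda>y. complex_of_real (sqrt (Zw G y)) * h y) + eps powr b * L2norm h)"
    if eps: "0 < eps" "eps \<le> exp (- 1)" and G: "weight_fn Us Hs gu Cabs eps G" and h: "in_L2 h" for eps G h
  proof -
    interpret cutoff_weight "Zw G" K g
      unfolding K_def g_def using weight_fn_cutoff_weight[OF G gu gamma0] .
    show ?thesis
      using L2norm_log_weight_le[OF h p b K eps] L2norm_nonneg[of h]
        L2norm_nonneg[of "\<lambda>y. complex_of_real (sqrt (Zw G y)) * h y"]
      by (elim order_trans) (simp add: C_def mult_right_mono)
  qed
  have part2: "cmod (inner0 R (prim h))
      \<le> C * \<bar>ln eps\<bar> powr p * L2norm (\<lambda>y. complex_of_real (sqrt (Zw G y)) * R y) *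
         (L2norm (\<lambda>y. complex_of_real (sqrt (Zw G y)) * h y) + eps powr b * L2norm h)"
    if eps: "0 < eps" "eps \<le> exp (- 1)" and G: "weight_fn Us Hs gu Cabs eps G" and h: "in_L2 h"
      and R: "in_L2 R" "\<And>y. y \<notin> {0..2} \<Longrightarrow> R y = 0" for eps G h R
  proof -
    interpret cutoff_weight "Zw G" K g
      unfolding K_def g_def using weight_fn_cutoff_weight[OF G gu gamma0] .
    have "cmod (inner0 R (prim h))
      \<le> duality_const b g * \<bar>ln eps\<bar> * L2norm (\<lambda>y. complex_of_real (sqrt (Zw G y)) * R y) *
         (L2norm (\<lambda>y. complex_of_real (sqrt (Zw G y)) * h y) + eps powr b * L2norm h)"
      by (rule norm_inner_prim_le_log[OF h R b eps])
    also have "\<dots> \<le> C * \<bar>ln eps\<bar> powr p * L2norm (\<lambda>y. complex_of_real (sqrt (Zw G y)) * R y) *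
         (L2norm (\<lambda>y. complex_of_real (sqrt (Zw G y)) * h y) + eps powr b * L2norm h)"
      using abs_ln_le_powr[OF eps p] C
      by (intro mult_right_mono mult_mono) (auto simp: C_def L2norm_nonneg)
    finally show ?thesis .
  qed
  show ?thesis
    by (rule exI[of _ C], rule conjI[OF C], rule exI[of _ "exp (- 1)"]) (use part1 part2 in auto)
qed

theorem lemma2p4:
  fixes Us Hs :: "real \<Rightarrow> real" and UE HE gl gu Cabs :: real
  assumes "shear_profile Us Hs UE HE gl gu"
    and "Cabs > 0"
  shows "\<forall>\<eta>>0. \<forall>\<delta>\<ge>0. \<exists>C>0. \<exists>eps0>0. \<forall>eps. 0 < eps \<and> eps < eps0 \<longrightarrow>
     (\<forall>G. weight_fn Us Hs gu Cabs eps G \<longrightarrow>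
       (\<forall>h. in_L2 h \<longrightarrow>
          L2norm (\<lambda>y. complex_of_real (sqrt (Zw G y) * \<bar>ln (Zw G y)\<bar> powr (1 + \<eta>/3)) * h y)
            \<le> C * \<bar>ln eps\<bar> powr (1 + \<eta>/3) *
               (L2norm (\<lambda>y. complex_of_real (sqrt (Zw G y)) * h y) + eps powr (1/4 + \<delta>) * L2norm h)
        \<and> (\<forall>R. in_L2 R \<and> (\<forall>y. y \<notin> {0..2} \<longrightarrow> R y = 0) \<longrightarrow>
             cmod (inner0 R (prim h))
               \<le> C * \<bar>ln eps\<bar> powr (1 + \<eta>/3) * L2norm (\<lambda>y. complex_of_real (sqrt (Zw G y)) * R y) *
                  (L2norm (\<lambda>y. complex_of_real (sqrt (Zw G y)) * h y) + eps powr (1/4 + \<delta>) * L2norm h))))"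
  by (intro allI impI log_weight_estimates[OF assms(1)]) simp_all

end
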